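(* Let $H$ be a Hilbert space and $U_{ik}\in B(H)$, $i,k=1,\dots,n$, operators satisfying relations (R1)–(R5); put $P_{ik}=U_{ik}^*U_{ik}$ and $Q_{ik}=U_{ik}U_{ik}^*$. Then for all $i,j,k,l$: $P_{ik}P_{il}=0$ and $Q_{ik}Q_{il}=0$ if $k\neq l$; $P_{ik}P_{jk}=0$ and $Q_{ik}Q_{jk}=0$ if $i\neq j$.
   Context: $n\ge2$, $\theta\in M_n(\mathbb R)$ skew-symmetric, $\omega_{ij}=e^{2\pi i\theta_{ij}}$. Relations, for all $i,j,k,l\in\{1,\dots,n\}$: (R1) $U_{ik}U_{jl}+\omega_{ji}U_{jk}U_{il}=\omega_{kl}U_{il}U_{jk}+\omega_{ji}\omega_{kl}U_{jl}U_{ik}$; (R2) $\sum_iU_{ik}U_{il}^*=\delta_{kl}1$; (R3) $\sum_iU_{il}^*U_{ik}=\delta_{kl}1$; (R4) $U_{jk}U_{ik}^*=0$ for $i\neq j$; (R5) $U_{ik}^*U_{jk}=0$ for $i\neq j$. *)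

theory Defs
  imports "HOL-Analysis.Analysis"
begin

text \<open>The HOL library only provides real inner product spaces, so the complex notions are
  introduced here as type classes.\<close>

class complex_vector = real_vector +
  fixes scaleC :: "complex \<Rightarrow> 'a \<Rightarrow> 'a"
  assumes scaleC_scaleR: "scaleC (complex_of_real r) x = scaleR r x"
    and scaleC_add_right: "scaleC a (x + y) = scaleC a x + scaleC a y"
    and scaleC_add_left: "scaleC (a + b) x = scaleC a x + scaleC b x"
    and scaleC_scaleC: "scaleC a (scaleC b x) = scaleC (a * b) x"
    and scaleC_one: "scaleC 1 x = x"

class complex_inner = complex_vector + real_normed_vector +
  fixes cinner :: "'a \<Rightarrow> 'a \<Rightarrow> complex"
  assumes cinner_commute: "cinner x y = cnj (cinner y x)"
    and cinner_add_left: "cinner (x + y) z = cinner x z + cinner y z"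
    and cinner_scaleC_left: "cinner (scaleC r x) y = cnj r * cinner x y"
    and cinner_self_real: "Im (cinner x x) = 0"
    and cinner_self_nonneg: "0 \<le> Re (cinner x x)"
    and cinner_self_eq_zero: "cinner x x = 0 \<longleftrightarrow> x = 0"
    and norm_eq_sqrt_cinner: "norm x = sqrt (Re (cinner x x))"

class chilbert = complex_inner + complete_space

definition bounded_clinear :: "('a::complex_inner \<Rightarrow> 'b::complex_inner) \<Rightarrow> bool" where
  "bounded_clinear f \<longleftrightarrow>
     (\<forall>x y. f (x + y) = f x + f y) \<and> (\<forall>c x. f (scaleC c x) = scaleC c (f x)) \<and>
     (\<exists>K. \<forall>x. norm (f x) \<le> norm x * K)"

definition is_adjoint :: "('a::complex_inner \<Rightarrow> 'a) \<Rightarrow> ('a \<Rightarrow> 'a) \<Rightarrow> bool" where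
  "is_adjoint f g \<longleftrightarrow> (\<forall>x y. cinner (f x) y = cinner x (g y))"

definition omega :: "(nat \<Rightarrow> nat \<Rightarrow> real) \<Rightarrow> nat \<Rightarrow> nat \<Rightarrow> complex" where
  "omega \<theta> i j = exp (2 * pi * \<i> * complex_of_real (\<theta> i j))"

end

theory Submission
  imports Defs
begin

text \<open>For k \<noteq> l, (R2) says that the sum over j of U_jk U*_jl vanishes. Multiplying it on
  the left by U*_ik kills every summand with j \<noteq> i by (R5), leaving U*_ik U_ik U*_il = 0, hence
  P_ik P_il = 0; symmetrically (R3) and (R4) give U_ik U*_ik U_il = 0, hence Q_ik Q_il = 0.
  For i \<noteq> j the products contain a factor U_ik U*_jk or U*_ik U_jk, which vanishes by (R4)
  or (R5).\<close>

(* Qualified name: HOL-Analysis also has a measure-theoretic additive. *)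
lemma additive_cinner_right: "Modules.additive (cinner (z::'a::complex_inner))"
proof
  fix x y
  have "cinner z (x + y) = cnj (cinner (x + y) z)" by (rule cinner_commute)
  also have "\<dots> = cnj (cinner x z) + cnj (cinner y z)" by (simp add: cinner_add_left)
  also have "\<dots> = cinner z x + cinner z y" by (metis cinner_commute)
  finally show "cinner z (x + y) = cinner z x + cinner z y" .
qed

lemma cinner_right_ext:
  fixes x y :: "'a::complex_inner"
  assumes "\<And>w. cinner w x = cinner w y"
  shows "x = y"
proof -
  have "cinner (x - y) (x - y) = cinner (x - y) x - cinner (x - y) y"
    by (rule additive.diff[OF additive_cinner_right])
  also have "\<dots> = 0" by (simp add: assms)
  finally show ?thesis by (simp add: cinner_self_eq_zero)
qed

lemma is_adjoint_additive:
  assumes "is_adjoint f g" and "Modules.additive f"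
  shows "Modules.additive g"
proof
  fix a b
  show "g (a + b) = g a + g b"
  proof (rule cinner_right_ext)
    fix w
    interpret fw: Modules.additive "cinner (f w)" by (rule additive_cinner_right)
    interpret w: Modules.additive "cinner w" by (rule additive_cinner_right)
    have adj: "cinner (f w) y = cinner w (g y)" for y
      using assms(1) by (simp add: is_adjoint_def)
    have "cinner w (g (a + b)) = cinner (f w) a + cinner (f w) b"
      by (simp only: adj[symmetric] fw.add)
    also have "\<dots> = cinner w (g a + g b)"
      by (simp only: adj w.add)
    finally show "cinner w (g (a + b)) = cinner w (g a + g b)" .
  qed
qed

lemma bounded_clinear_additive: "bounded_clinear f \<Longrightarrow> Modules.additive f"
  unfolding bounded_clinear_def by (auto intro: additive.intro)

lemma additive_kills_summand:
  assumes "Modules.additive C" and "finite I" and "i \<in> I"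
    and "(\<Sum>j\<in>I. a j) = 0"
    and "\<And>j. j \<in> I \<Longrightarrow> j \<noteq> i \<Longrightarrow> C (a j) = 0"
  shows "C (a i) = 0"
proof -
  have "0 = C (\<Sum>j\<in>I. a j)" using assms(4) additive.zero[OF assms(1)] by simp
  also have "\<dots> = (\<Sum>j\<in>I. C (a j))" by (rule additive.sum[OF assms(1)])
  also have "\<dots> = (\<Sum>j\<in>{i}. C (a j))"
    using assms(2,3,5) by (intro sum.mono_neutral_right) auto
  finally show ?thesis by simp
qed

theorem corollary3p11:
  fixes n :: nat and \<theta> :: "nat \<Rightarrow> nat \<Rightarrow> real"
    and U Ustar :: "nat \<Rightarrow> nat \<Rightarrow> 'h::chilbert \<Rightarrow> 'h"
  assumes n2: "n \<ge> 2"
    and skew: "\<forall>i\<in>{1..n}. \<forall>j\<in>{1..n}. \<theta> j i = - \<theta> i j"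
    and bdd: "\<forall>i\<in>{1..n}. \<forall>k\<in>{1..n}. bounded_clinear (U i k)"
    and adj: "\<forall>i\<in>{1..n}. \<forall>k\<in>{1..n}. is_adjoint (U i k) (Ustar i k)"
    and R1: "\<forall>i\<in>{1..n}. \<forall>j\<in>{1..n}. \<forall>k\<in>{1..n}. \<forall>l\<in>{1..n}. \<forall>x.
       U i k (U j l x) + scaleC (omega \<theta> j i) (U j k (U i l x))
       = scaleC (omega \<theta> k l) (U i l (U j k x))
         + scaleC (omega \<theta> j i * omega \<theta> k l) (U j l (U i k x))"
    and R2: "\<forall>k\<in>{1..n}. \<forall>l\<in>{1..n}. \<forall>x.
       (\<Sum>i\<in>{1..n}. U i k (Ustar i l x)) = (if k = l then x else 0)"
    and R3: "\<forall>k\<in>{1..n}. \<forall>l\<in>{1..n}. \<forall>x.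
       (\<Sum>i\<in>{1..n}. Ustar i l (U i k x)) = (if k = l then x else 0)"
    and R4: "\<forall>i\<in>{1..n}. \<forall>j\<in>{1..n}. \<forall>k\<in>{1..n}. i \<noteq> j \<longrightarrow>
       (\<forall>x. U j k (Ustar i k x) = 0)"
    and R5: "\<forall>i\<in>{1..n}. \<forall>j\<in>{1..n}. \<forall>k\<in>{1..n}. i \<noteq> j \<longrightarrow>
       (\<forall>x. Ustar i k (U j k x) = 0)"
  shows "\<forall>i\<in>{1..n}. \<forall>j\<in>{1..n}. \<forall>k\<in>{1..n}. \<forall>l\<in>{1..n}.
     (k \<noteq> l \<longrightarrow>
        (\<forall>x. Ustar i k (U i k (Ustar i l (U i l x))) = 0) \<and>
        (\<forall>x. U i k (Ustar i k (U i l (Ustar i l x))) = 0)) \<and>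
     (i \<noteq> j \<longrightarrow>
        (\<forall>x. Ustar i k (U i k (Ustar j k (U j k x))) = 0) \<and>
        (\<forall>x. U i k (Ustar i k (U j k (Ustar j k x))) = 0))"
proof -
  have U_add: "Modules.additive (U i k)" if "i \<in> {1..n}" "k \<in> {1..n}" for i k
    using bdd that by (simp add: bounded_clinear_additive)
  have Ustar_add: "Modules.additive (Ustar i k)" if "i \<in> {1..n}" "k \<in> {1..n}" for i k
    using adj that by (blast intro: is_adjoint_additive U_add)
  have R4': "U j k (Ustar i k x) = 0"
    if "i \<in> {1..n}" "j \<in> {1..n}" "k \<in> {1..n}" "i \<noteq> j" for i j k x
    using R4 that by blast
  have R5': "Ustar i k (U j k x) = 0"
    if "i \<in> {1..n}" "j \<in> {1..n}" "k \<in> {1..n}" "i \<noteq> j" for i j k x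
    using R5 that by blast
  have PP_row: "Ustar i k (U i k (Ustar i l y)) = 0"
    if "i \<in> {1..n}" "k \<in> {1..n}" "l \<in> {1..n}" "k \<noteq> l" for i k l y
  proof (rule additive_kills_summand[where a = "\<lambda>j. U j k (Ustar j l y)", OF Ustar_add])
    show "(\<Sum>j\<in>{1..n}. U j k (Ustar j l y)) = 0" using R2 that by simp
  qed (use that R5' in auto)
  have QQ_row: "U i k (Ustar i k (U i l y)) = 0"
    if "i \<in> {1..n}" "k \<in> {1..n}" "l \<in> {1..n}" "k \<noteq> l" for i k l y
  proof (rule additive_kills_summand[where a = "\<lambda>j. Ustar j k (U j l y)", OF U_add])
    show "(\<Sum>j\<in>{1..n}. Ustar j k (U j l y)) = 0" using R3 that by simp
  qed (use that R4' in auto)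
  have PP_col: "Ustar i k (U i k (Ustar j k y)) = 0"
    if "i \<in> {1..n}" "j \<in> {1..n}" "k \<in> {1..n}" "i \<noteq> j" for i j k y
    using that R4'[of j i k] additive.zero[OF Ustar_add] by simp
  have QQ_col: "U i k (Ustar i k (U j k y)) = 0"
    if "i \<in> {1..n}" "j \<in> {1..n}" "k \<in> {1..n}" "i \<noteq> j" for i j k y
    using that R5'[of i j k] additive.zero[OF U_add] by simp
  show ?thesis by (simp add: PP_row QQ_row PP_col QQ_col)
qed

end
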